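(* There is a constant $C$ such that for every $N\ge 1$ and every nonempty submatrix $B$ of an $N\times N$ matrix, the quadtree over the $N\times N$ matrix satisfies $|I(B)|\le CN$; that is, $|I(B)|=O(N)$.
   Context: The quadtree over an $N\times N$ matrix (coordinates $\{0,\dots,N-1\}^2$) is the rooted tree of nodes defined as follows. Each node covers a submatrix $[x_0,x_1][y_0,y_1]=\{(x,y):x_0\le x\le x_1,\ y_0\le y\le y_1\}$. The root covers $[0,N-1][0,N-1]$. A node covering $[x_0,x_1][y_0,y_1]$ with more than one element has as children the nodes covering those of the four submatrices $[x_0,x_m][y_0,y_m]$, $[x_m+1,x_1][y_0,y_m]$, $[x_0,x_m][y_m+1,y_1]$, $[x_m+1,x_1][y_m+1,y_1]$ that are nonempty, where $x_m=\lfloor(x_0+x_1)/2\rfloor$, $y_m=\lfloor(y_0+y_1)/2\rfloor$; nodes covering one element have no children. For a submatrix $B$, $S(B)$ denotes the smallest set of mutually disjoint quadtree nodes whose union is $B$ (the inclusion-maximal nodes contained in $B$), and $I(B)=\bigcup_{n\in S(B)}\{m: m \text{ a quadtree node with } m\supseteq n\}$. *)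

theory Defs
  imports Complex_Main
begin

text \<open>A rectangle (x0, x1, y0, y1) denotes the submatrix [x0,x1][y0,y1].
  Quadtree nodes are identified with the submatrices they cover (distinct nodes
  cover distinct submatrices).\<close>

type_synonym rect = "nat \<times> nat \<times> nat \<times> nat"

definition cells :: "rect \<Rightarrow> (nat \<times> nat) set" where
  "cells r = (case r of (x0, x1, y0, y1) \<Rightarrow>
      {(x, y). x0 \<le> x \<and> x \<le> x1 \<and> y0 \<le> y \<and> y \<le> y1})"

inductive_set qnode :: "nat \<Rightarrow> rect set" for N :: nat where
  root: "1 \<le> N \<Longrightarrow> (0, N - 1, 0, N - 1) \<in> qnode N"
| child: "\<lbrakk> (x0, x1, y0, y1) \<in> qnode N;
            x0 < x1 \<or> y0 < y1;
            (a0, a1) \<in> {(x0, (x0 + x1) div 2), ((x0 + x1) div 2 + 1, x1)};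
            (b0, b1) \<in> {(y0, (y0 + y1) div 2), ((y0 + y1) div 2 + 1, y1)};
            a0 \<le> a1; b0 \<le> b1 \<rbrakk>
          \<Longrightarrow> (a0, a1, b0, b1) \<in> qnode N"

definition qS :: "nat \<Rightarrow> (nat \<times> nat) set \<Rightarrow> rect set" where
  "qS N B = {n \<in> qnode N. cells n \<subseteq> B \<and>
      (\<forall>m \<in> qnode N. cells n \<subseteq> cells m \<and> cells m \<subseteq> B \<longrightarrow> m = n)}"

definition qI :: "nat \<Rightarrow> (nat \<times> nat) set \<Rightarrow> rect set" where
  "qI N B = {m \<in> qnode N. \<exists>n \<in> qS N B. cells n \<subseteq> cells m}"

end

theory Submission
  imports Defs
begin

text \<open>Every node of I(B) is the root, a node straddling B (meeting B without lying inside
  it), or a child of such a node: a node of I(B) inside B is a maximal node of S(B), so its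
  parent is not inside B. A straddling node is cut by one of the four grid lines bounding B.
  The sides of the nodes of depth j are intervals of one fixed partition of [0, N - 1], so
  the nodes of depth j cut by a vertical line all share their x-side and there are at most
  2^j of them; moreover only depths with 2^j < N have sides of length > 1. Hence each line
  cuts at most 2N nodes, and |I(B)| \<le> 1 + 5 \<cdot> 8N.\<close>

fun bisect :: "nat \<times> nat \<Rightarrow> (nat \<times> nat) set" where
  "bisect (a, b) = {(a, (a + b) div 2), ((a + b) div 2 + 1, b)}"

text \<open>Halving a singleton yields the singleton itself and an empty pair, which is discarded;
  so a singleton side is carried to every greater depth, and both sides of a quadtree node
  have the node's depth even after one of them has stopped splitting.\<close>

primrec depth_intervals :: "nat \<Rightarrow> nat \<Rightarrow> (nat \<times> nat) set" where
  "depth_intervals N 0 = {(0, N - 1)}"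
| "depth_intervals N (Suc j) = {(a, b) \<in> \<Union>(bisect ` depth_intervals N j). a \<le> b}"

lemma finite_bisect: "finite (bisect I)"
  by (cases I) simp

lemma card_bisect_le: "card (bisect I) \<le> 2"
  by (cases I) (simp add: card_insert_if)

lemma bisect_subinterval:
  assumes "(a', b') \<in> bisect (a, b)" "a \<le> b"
  shows "a \<le> a' \<and> b' \<le> b \<and> b' - a' \<le> (b - a) div 2"
  using assms by auto

lemma bisect_disjoint:
  assumes "(a, b) \<in> bisect (c, d)" "(a', b') \<in> bisect (c, d)"
    and "a \<le> p" "p \<le> b" "a' \<le> p" "p \<le> b'"
  shows "(a, b) = (a', b')"
  using assms by auto

lemma depth_intervals_Suc_subset: "depth_intervals N (Suc j) \<subseteq> \<Union>(bisect ` depth_intervals N j)"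
  by auto

lemma finite_depth_intervals: "finite (depth_intervals N j)"
proof (induction j)
  case (Suc j)
  then show ?case
    by (intro finite_subset[OF depth_intervals_Suc_subset]) (auto simp: finite_bisect)
qed simp

lemma card_depth_intervals_le: "card (depth_intervals N j) \<le> 2 ^ j"
proof (induction j)
  case 0
  then show ?case by simp
next
  case (Suc j)
  have "card (depth_intervals N (Suc j)) \<le> card (\<Union>(bisect ` depth_intervals N j))"
    by (rule card_mono[OF _ depth_intervals_Suc_subset])
      (simp add: finite_depth_intervals finite_bisect)
  also have "\<dots> \<le> (\<Sum>I \<in> depth_intervals N j. card (bisect I))"
    by (rule card_UN_le[OF finite_depth_intervals])
  also have "\<dots> \<le> 2 * card (depth_intervals N j)"
    using sum_mono[of "depth_intervals N j" "\<lambda>I. card (bisect I)" "\<lambda>_. 2"] card_bisect_le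
    by (simp add: mult.commute)
  finally show ?case
    using Suc.IH by simp
qed

lemma depth_intervals_bounds:
  "(a, b) \<in> depth_intervals N j \<Longrightarrow> a \<le> b \<and> b \<le> N - 1 \<and> (b - a) * 2 ^ j \<le> N - 1"
proof (induction j arbitrary: a b)
  case 0
  then show ?case by simp
next
  case (Suc j)
  then obtain c d where parent: "(c, d) \<in> depth_intervals N j" "(a, b) \<in> bisect (c, d)" and "a \<le> b"
    by auto
  have IH: "c \<le> d" "d \<le> N - 1" "(d - c) * 2 ^ j \<le> N - 1"
    using Suc.IH[OF parent(1)] by auto
  have sub: "c \<le> a" "b \<le> d" "b - a \<le> (d - c) div 2"
    using bisect_subinterval[OF parent(2) IH(1)] by auto
  have "(b - a) * 2 ^ Suc j = ((b - a) * 2) * 2 ^ j"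
    by simp
  also have "\<dots> \<le> (d - c) * 2 ^ j"
    using sub(3) by (intro mult_le_mono1) linarith
  finally show ?case
    using \<open>a \<le> b\<close> sub IH by linarith
qed

lemma depth_intervals_unique:
  "(a, b) \<in> depth_intervals N j \<Longrightarrow> (a', b') \<in> depth_intervals N j \<Longrightarrow>
    a \<le> p \<Longrightarrow> p \<le> b \<Longrightarrow> a' \<le> p \<Longrightarrow> p \<le> b' \<Longrightarrow> (a, b) = (a', b')"
proof (induction j arbitrary: a b a' b')
  case 0
  then show ?case by simp
next
  case (Suc j)
  then obtain c d c' d' where
    parents: "(c, d) \<in> depth_intervals N j" "(a, b) \<in> bisect (c, d)"
      "(c', d') \<in> depth_intervals N j" "(a', b') \<in> bisect (c', d')"
    by auto
  have "c \<le> a" "b \<le> d" "c' \<le> a'" "b' \<le> d'"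
    using parents bisect_subinterval depth_intervals_bounds by blast+
  then have "(c, d) = (c', d')"
    using Suc parents by (meson order_trans)
  then show ?case
    using bisect_disjoint parents Suc.prems by blast
qed

definition depth_rects :: "nat \<Rightarrow> nat \<Rightarrow> rect set" where
  "depth_rects N j = {(a, b, c, d). (a, b) \<in> depth_intervals N j \<and> (c, d) \<in> depth_intervals N j}"

lemma qnode_in_depth_rects: "(a, b, c, d) \<in> qnode N \<Longrightarrow> \<exists>j. (a, b, c, d) \<in> depth_rects N j"
proof (induction rule: qnode.induct)
  case root
  have "(0, N - 1, 0, N - 1) \<in> depth_rects N 0"
    by (simp add: depth_rects_def)
  then show ?case ..
next
  case (child x0 x1 y0 y1 a0 a1 b0 b1)
  then obtain j where j: "(x0, x1) \<in> depth_intervals N j" "(y0, y1) \<in> depth_intervals N j"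
    by (auto simp: depth_rects_def)
  have "(a0, a1) \<in> bisect (x0, x1)" "(b0, b1) \<in> bisect (y0, y1)"
    using child.hyps by simp_all
  then have "(a0, a1, b0, b1) \<in> depth_rects N (Suc j)"
    using j child.hyps unfolding depth_rects_def depth_intervals.simps by blast
  then show ?case ..
qed

lemma qnode_bounds: "(a, b, c, d) \<in> qnode N \<Longrightarrow> a \<le> b \<and> b \<le> N - 1 \<and> c \<le> d \<and> d \<le> N - 1"
  using qnode_in_depth_rects depth_intervals_bounds unfolding depth_rects_def by blast

lemma finite_qnode: "finite (qnode N)"
proof (rule finite_subset)
  show "qnode N \<subseteq> {..N - 1} \<times> {..N - 1} \<times> {..N - 1} \<times> {..N - 1}"
    by (auto dest: qnode_bounds)
qed simp

lemma qnode_transpose: "(a, b, c, d) \<in> qnode N \<Longrightarrow> (c, d, a, b) \<in> qnode N"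
proof (induction rule: qnode.induct)
  case root
  then show ?case by (rule qnode.root)
next
  case (child x0 x1 y0 y1 a0 a1 b0 b1)
  show ?case
    by (rule qnode.child[OF child.IH]) (use child.hyps in auto)
qed

lemma qnode_cells_nonempty: "(a, b, c, d) \<in> qnode N \<Longrightarrow> cells (a, b, c, d) \<noteq> {}"
  by (cases rule: qnode.cases) (auto simp: cells_def)

definition children :: "rect \<Rightarrow> rect set" where
  "children P = (case P of (x0, x1, y0, y1) \<Rightarrow>
     (\<lambda>((a0, a1), (b0, b1)). (a0, a1, b0, b1)) ` (bisect (x0, x1) \<times> bisect (y0, y1)))"

lemma finite_children: "finite (children P)"
  by (auto simp: children_def finite_bisect split: prod.split)

lemma card_children_le: "card (children P) \<le> 4"
proof -
  obtain x0 x1 y0 y1 where P: "P = (x0, x1, y0, y1)"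
    by (cases P) auto
  have "card (children P) \<le> card (bisect (x0, x1) \<times> bisect (y0, y1))"
    unfolding P children_def prod.case by (rule card_image_le) (simp add: finite_bisect)
  also have "\<dots> \<le> 2 * 2"
    unfolding card_cartesian_product by (intro mult_le_mono card_bisect_le)
  finally show ?thesis by simp
qed

lemma qnode_parent:
  assumes "(a0, a1, b0, b1) \<in> qnode N"
  obtains (root) "(a0, a1, b0, b1) = (0, N - 1, 0, N - 1)"
    | (child) P where "P \<in> qnode N" "(a0, a1, b0, b1) \<in> children P" "(a0, a1, b0, b1) \<noteq> P"
        "cells (a0, a1, b0, b1) \<subseteq> cells P"
  using assms
proof (cases rule: qnode.cases)
  case root
  then show thesis using that(1) by simp
next
  case (child x0 x1 y0 y1)
  have halves: "(a0, a1) \<in> bisect (x0, x1)" "(b0, b1) \<in> bisect (y0, y1)"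
    using child(3,4) by simp_all
  have "x0 \<le> x1" "y0 \<le> y1"
    using qnode_bounds[OF child(1)] by auto
  then have "x0 \<le> a0" "a1 \<le> x1" "y0 \<le> b0" "b1 \<le> y1"
    using halves bisect_subinterval by blast+
  then have "cells (a0, a1, b0, b1) \<subseteq> cells (x0, x1, y0, y1)"
    by (auto simp: cells_def)
  moreover have "(a0, a1, b0, b1) \<in> children (x0, x1, y0, y1)"
    unfolding children_def prod.case by (rule image_eqI[OF _ SigmaI[OF halves]]) simp
  moreover have "(a0, a1, b0, b1) \<noteq> (x0, x1, y0, y1)"
    using child(2-4) by auto
  ultimately show thesis
    using that(2) child(1) by blast
qed

definition straddling :: "nat \<Rightarrow> (nat \<times> nat) set \<Rightarrow> rect set" where
  "straddling N B = {m \<in> qnode N. cells m \<inter> B \<noteq> {} \<and> \<not> cells m \<subseteq> B}"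

lemma qI_subset_straddling:
  "qI N B \<subseteq> insert (0, N - 1, 0, N - 1) (straddling N B \<union> \<Union>(children ` straddling N B))"
proof
  fix m
  assume "m \<in> qI N B"
  then obtain n where m: "m \<in> qnode N" and n: "n \<in> qS N B" and "cells n \<subseteq> cells m"
    unfolding qI_def by blast
  from n have "n \<in> qnode N" "cells n \<subseteq> B"
    and maximal: "\<And>m'. m' \<in> qnode N \<Longrightarrow> cells n \<subseteq> cells m' \<Longrightarrow> cells m' \<subseteq> B \<Longrightarrow> m' = n"
    unfolding qS_def by auto
  have "cells n \<noteq> {}"
    using \<open>n \<in> qnode N\<close> qnode_cells_nonempty by (cases n) blast
  show "m \<in> insert (0, N - 1, 0, N - 1) (straddling N B \<union> \<Union>(children ` straddling N B))"
  proof (cases "cells m \<subseteq> B")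
    case False
    then have "m \<in> straddling N B"
      using m \<open>cells n \<noteq> {}\<close> \<open>cells n \<subseteq> B\<close> \<open>cells n \<subseteq> cells m\<close>
      unfolding straddling_def by blast
    then show ?thesis by blast
  next
    case True
    then have "m = n"
      using maximal m \<open>cells n \<subseteq> cells m\<close> by blast
    obtain a0 a1 b0 b1 where m_def: "m = (a0, a1, b0, b1)"
      by (cases m) auto
    from m[unfolded m_def] show ?thesis
    proof (cases rule: qnode_parent)
      case root
      then show ?thesis
        using m_def by simp
    next
      case (child P)
      have "\<not> cells P \<subseteq> B"
        using maximal[of P] child \<open>m = n\<close> \<open>cells n \<subseteq> cells m\<close> unfolding m_def by blast
      then have "P \<in> straddling N B"
        using child \<open>cells n \<noteq> {}\<close> \<open>cells n \<subseteq> B\<close> \<open>cells n \<subseteq> cells m\<close>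
        unfolding straddling_def m_def by blast
      then show ?thesis
        using child m_def by blast
    qed
  qed
qed

definition x_cut :: "nat \<Rightarrow> nat \<Rightarrow> rect set" where
  "x_cut N p = {(a, b, c, d) \<in> qnode N. a \<le> p \<and> p < b}"

definition y_cut :: "nat \<Rightarrow> nat \<Rightarrow> rect set" where
  "y_cut N p = {(a, b, c, d) \<in> qnode N. c \<le> p \<and> p < d}"

text \<open>For x0 = 0 the truncated x0 - 1 is harmless: no node sticks out to the left of B.\<close>

lemma straddling_subset_cuts:
  "straddling N (cells (x0, x1, y0, y1))
     \<subseteq> x_cut N (x0 - 1) \<union> x_cut N x1 \<union> y_cut N (y0 - 1) \<union> y_cut N y1"
proof
  fix m
  assume m: "m \<in> straddling N (cells (x0, x1, y0, y1))"
  obtain a b c d where m_def: "m = (a, b, c, d)"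
    by (cases m) auto
  from m obtain u v u' v' where
    "(u, v) \<in> cells m" "(u, v) \<in> cells (x0, x1, y0, y1)"
    "(u', v') \<in> cells m" "(u', v') \<notin> cells (x0, x1, y0, y1)"
    unfolding straddling_def by auto
  then have "a \<le> u" "u \<le> b" "c \<le> v" "v \<le> d" "x0 \<le> u" "u \<le> x1" "y0 \<le> v" "v \<le> y1"
    and "a \<le> u'" "u' \<le> b" "c \<le> v'" "v' \<le> d"
    and "u' < x0 \<or> x1 < u' \<or> v' < y0 \<or> y1 < v'"
    unfolding m_def cells_def by auto
  then have "a \<le> x0 - 1 \<and> x0 - 1 < b \<or> a \<le> x1 \<and> x1 < b
      \<or> c \<le> y0 - 1 \<and> y0 - 1 < d \<or> c \<le> y1 \<and> y1 < d"
    by linarith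
  moreover have "(a, b, c, d) \<in> qnode N"
    using m unfolding m_def straddling_def by simp
  ultimately show "m \<in> x_cut N (x0 - 1) \<union> x_cut N x1 \<union> y_cut N (y0 - 1) \<union> y_cut N y1"
    unfolding m_def x_cut_def y_cut_def by auto
qed

lemma finite_pow2_less: "finite {j. (2::nat) ^ j < N}"
  by (rule finite_subset[of _ "{..<N}"]) (auto intro: less_trans[OF less_exp])

lemma sum_pow2_less_le: "(\<Sum>j | (2::nat) ^ j < N. 2 ^ j) \<le> 2 * N"
proof (cases "{j. (2::nat) ^ j < N} = {}")
  case False
  define M where "M = Max {j. (2::nat) ^ j < N}"
  have "2 ^ M < N"
    using Max_in[OF finite_pow2_less False] unfolding M_def by simp
  have sub: "{j. (2::nat) ^ j < N} \<subseteq> {0..<Suc M}"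
    using Max_ge[OF finite_pow2_less] unfolding M_def by fastforce
  have "(\<Sum>j | (2::nat) ^ j < N. 2 ^ j) \<le> (\<Sum>j = 0..<Suc M. (2::nat) ^ j)"
    by (rule sum_mono2[OF _ sub]) simp_all
  also have "\<dots> = 2 ^ Suc M - 1"
    by (rule sum_power2)
  finally show ?thesis
    using \<open>2 ^ M < N\<close> by simp
qed simp

lemma
  shows finite_depth_rects_column: "finite {(a, b, c, d) \<in> depth_rects N j. a \<le> p \<and> p \<le> b}"
    and card_depth_rects_column_le: "card {(a, b, c, d) \<in> depth_rects N j. a \<le> p \<and> p \<le> b} \<le> 2 ^ j"
proof -
  let ?S = "{(a, b, c, d) \<in> depth_rects N j. a \<le> p \<and> p \<le> b}"
  let ?y_side = "\<lambda>(a, b, c, d). (c, d)"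
  have inj: "inj_on ?y_side ?S"
    using depth_intervals_unique by (fastforce simp: inj_on_def depth_rects_def)
  have image: "?y_side ` ?S \<subseteq> depth_intervals N j"
    by (auto simp: depth_rects_def)
  show "finite ?S"
    using finite_imageD[OF finite_subset[OF image finite_depth_intervals] inj] .
  have "card ?S \<le> card (depth_intervals N j)"
    by (rule card_inj_on_le[OF inj image finite_depth_intervals])
  then show "card ?S \<le> 2 ^ j"
    using card_depth_intervals_le order_trans by blast
qed

lemma finite_x_cut: "finite (x_cut N p)"
  by (rule finite_subset[OF _ finite_qnode]) (auto simp: x_cut_def)

lemma finite_y_cut: "finite (y_cut N p)"
  by (rule finite_subset[OF _ finite_qnode]) (auto simp: y_cut_def)

lemma card_x_cut_le: "card (x_cut N p) \<le> 2 * N"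
proof -
  let ?T = "\<lambda>j. {(a, b, c, d) \<in> depth_rects N j. a \<le> p \<and> p \<le> b}"
  have "x_cut N p \<subseteq> (\<Union>j \<in> {j. 2 ^ j < N}. ?T j)"
  proof
    fix m
    assume "m \<in> x_cut N p"
    then obtain a b c d where m: "m = (a, b, c, d)" "(a, b, c, d) \<in> qnode N" "a \<le> p" "p < b"
      unfolding x_cut_def by auto
    then obtain j where j: "(a, b, c, d) \<in> depth_rects N j"
      using qnode_in_depth_rects by blast
    have "1 * 2 ^ j \<le> (b - a) * 2 ^ j"
      using m by (intro mult_le_mono1) simp
    also have "\<dots> \<le> N - 1"
      using j depth_intervals_bounds by (simp add: depth_rects_def)
    finally have "2 ^ j \<le> N - 1"
      by simp
    moreover have "(0::nat) < 2 ^ j"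
      by simp
    ultimately have "2 ^ j < N"
      by linarith
    then show "m \<in> (\<Union>j \<in> {j. 2 ^ j < N}. ?T j)"
      using j m by auto
  qed
  then have "card (x_cut N p) \<le> card (\<Union>j \<in> {j. 2 ^ j < N}. ?T j)"
    by (rule card_mono[rotated]) (simp add: finite_pow2_less finite_depth_rects_column)
  also have "\<dots> \<le> (\<Sum>j | 2 ^ j < N. card (?T j))"
    by (rule card_UN_le[OF finite_pow2_less])
  also have "\<dots> \<le> (\<Sum>j | 2 ^ j < N. 2 ^ j)"
    by (rule sum_mono) (rule card_depth_rects_column_le)
  also have "\<dots> \<le> 2 * N"
    by (rule sum_pow2_less_le)
  finally show ?thesis .
qed

lemma card_y_cut_le: "card (y_cut N p) \<le> 2 * N"
proof -
  have "y_cut N p \<subseteq> (\<lambda>(a, b, c, d). (c, d, a, b)) ` x_cut N p"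
  proof
    fix m
    assume "m \<in> y_cut N p"
    then obtain a b c d where m: "m = (a, b, c, d)" "(a, b, c, d) \<in> qnode N" "c \<le> p" "p < d"
      unfolding y_cut_def by auto
    then have "(c, d, a, b) \<in> x_cut N p"
      unfolding x_cut_def using qnode_transpose by blast
    then show "m \<in> (\<lambda>(a, b, c, d). (c, d, a, b)) ` x_cut N p"
      by (rule rev_image_eqI) (simp add: m)
  qed
  then have "card (y_cut N p) \<le> card ((\<lambda>(a, b, c, d). (c, d, a, b)) ` x_cut N p)"
    by (rule card_mono[rotated]) (simp add: finite_x_cut)
  also have "\<dots> \<le> card (x_cut N p)"
    by (rule card_image_le[OF finite_x_cut])
  finally have "card (y_cut N p) \<le> card (x_cut N p)" .
  then show ?thesis
    using card_x_cut_le by (rule order_trans)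
qed

lemma finite_straddling: "finite (straddling N B)"
  using finite_qnode by (simp add: straddling_def)

lemma card_straddling_le: "card (straddling N (cells (x0, x1, y0, y1))) \<le> 8 * N"
proof -
  have "card (straddling N (cells (x0, x1, y0, y1)))
      \<le> card (x_cut N (x0 - 1) \<union> x_cut N x1 \<union> y_cut N (y0 - 1) \<union> y_cut N y1)"
    by (rule card_mono[OF _ straddling_subset_cuts]) (simp add: finite_x_cut finite_y_cut)
  also have "\<dots> \<le> card (x_cut N (x0 - 1)) + card (x_cut N x1)
      + card (y_cut N (y0 - 1)) + card (y_cut N y1)"
    by (intro card_Un_le[THEN order_trans] add_mono) simp_all
  also have "\<dots> \<le> 8 * N"
    using card_x_cut_le[of N "x0 - 1"] card_x_cut_le[of N x1]
      card_y_cut_le[of N "y0 - 1"] card_y_cut_le[of N y1] by linarith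
  finally show ?thesis .
qed

lemma card_with_children_le:
  assumes "finite S"
  shows "card (S \<union> \<Union>(children ` S)) \<le> 5 * card S"
proof -
  have "card (\<Union>(children ` S)) \<le> (\<Sum>P \<in> S. card (children P))"
    by (rule card_UN_le[OF assms])
  also have "\<dots> \<le> 4 * card S"
    using sum_mono[of S "\<lambda>P. card (children P)" "\<lambda>_. 4"] card_children_le by simp
  finally show ?thesis
    using card_Un_le[of S "\<Union>(children ` S)"] by linarith
qed

lemma card_qI_le: "card (qI N (cells (x0, x1, y0, y1))) \<le> 1 + 40 * N"
proof -
  let ?S = "straddling N (cells (x0, x1, y0, y1))"
  have "card (qI N (cells (x0, x1, y0, y1)))
      \<le> card (insert (0, N - 1, 0, N - 1) (?S \<union> \<Union>(children ` ?S)))"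
    by (rule card_mono[OF _ qI_subset_straddling]) (simp add: finite_straddling finite_children)
  also have "\<dots> \<le> 1 + card (?S \<union> \<Union>(children ` ?S))"
    by (simp add: card_insert_if finite_straddling finite_children)
  also have "\<dots> \<le> 1 + 5 * card ?S"
    using card_with_children_le[OF finite_straddling] by simp
  also have "\<dots> \<le> 1 + 40 * N"
    using card_straddling_le[of N x0 x1 y0 y1] by simp
  finally show ?thesis .
qed

theorem theorem2:
  shows "\<exists>C :: real. \<forall>N :: nat. \<forall>x0 x1 y0 y1 :: nat.
           1 \<le> N \<longrightarrow> x0 \<le> x1 \<longrightarrow> x1 < N \<longrightarrow> y0 \<le> y1 \<longrightarrow> y1 < N \<longrightarrow>
           real (card (qI N (cells (x0, x1, y0, y1)))) \<le> C * real N"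
proof (intro exI[of _ 41] allI impI)
  fix N x0 x1 y0 y1 :: nat
  assume "1 \<le> N"
  then have "card (qI N (cells (x0, x1, y0, y1))) \<le> 41 * N"
    using card_qI_le[of N x0 x1 y0 y1] by linarith
  then show "real (card (qI N (cells (x0, x1, y0, y1)))) \<le> 41 * real N"
    by (metis of_nat_mono of_nat_mult of_nat_numeral)
qed

end
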